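(* Let $S$ be a countable set and $(Y_k,Z_k)_{k\ge0}$ a process with values in $S\times\mathbb R_+$ satisfying the following property (M1): for all $k\ge1$, $y\in S$ and measurable $A\subseteq\mathbb R_+$, $$\mathbb P\bigl(Y_k=y,Z_k\in A\mid Y_{k-1},Z_{k-1},\dots,Y_0,Z_0\bigr)=\mathbb P\bigl(Y_1'=y,Z_1'\in A\mid Y_0'=Y_{k-1}\bigr),$$ where $(Y'_k,Z'_k)$ is an independent copy of the process (so the one-step transition from time $k-1$ depends on the past only through $Y_{k-1}$). Write $\mathbb E_u[\cdot]=\mathbb E[\cdot\mid Y_0=u]$. Suppose there exist $\alpha\in(0,1]$ and $\theta>0$ with $\mathbb E[e^{\theta Z_0^\alpha}]<\infty$ and $M:=\sup_{u\in S}\mathbb E_u[e^{\theta Z_1^\alpha}]<\infty$. Then for all $k\ge0$, $$\mathbb E\Bigl[e^{\theta\left(\sum_{i=0}^kZ_i\right)^\alpha}\Bigr]\le M^k\,\mathbb E\bigl[e^{\theta Z_0^\alpha}\bigr].$$ Consequently there exist $C,C'>0$ depending only on $\theta$, $\mathbb E[e^{\theta Z_0^\alpha}]$ and $M$ such that for all $k\ge0$, $$\mathbb P\Bigl(\sum_{i=0}^kZ_i>Ck^{1/\alpha}\Bigr)\le e^{-C'k}.$$ *)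

theory Defs
  imports "HOL-Probability.Probability"
begin

definition past_alg :: "'a measure \<Rightarrow> (nat \<Rightarrow> 'a \<Rightarrow> 's) \<Rightarrow> (nat \<Rightarrow> 'a \<Rightarrow> real) \<Rightarrow> nat \<Rightarrow> 'a measure" where
  "past_alg P Y Z k =
     vimage_algebra (space P) (\<lambda>\<omega>. \<lambda>i\<in>{..<k}. (Y i \<omega>, Z i \<omega>))
       (PiM {..<k} (\<lambda>_. count_space UNIV \<Otimes>\<^sub>M (borel :: real measure)))"

text \<open>Standing setting: (Y_k,Z_k) with values in S x R_+ (S = the countable type 's),
  satisfying (M1) with one-step transition law K u = law of (Y_1,Z_1) for the process started at u.\<close>
definition M1_setting ::
  "'a measure \<Rightarrow> (nat \<Rightarrow> 'a \<Rightarrow> 's::countable) \<Rightarrow> (nat \<Rightarrow> 'a \<Rightarrow> real) \<Rightarrow> ('s \<Rightarrow> ('s \<times> real) measure) \<Rightarrow> bool" where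
  "M1_setting P Y Z K \<longleftrightarrow>
     prob_space P \<and>
     (\<forall>k. Y k \<in> measurable P (count_space UNIV)) \<and>
     (\<forall>k. Z k \<in> borel_measurable P) \<and>
     (\<forall>k. \<forall>\<omega>\<in>space P. 0 \<le> Z k \<omega>) \<and>
     (\<forall>u. prob_space (K u) \<and> sets (K u) = sets (count_space UNIV \<Otimes>\<^sub>M (borel :: real measure))) \<and>
     (\<forall>k\<ge>1. \<forall>y. \<forall>A\<in>sets (borel :: real measure).
        AE \<omega> in P. real_cond_exp P (past_alg P Y Z k)
                       (indicator {\<omega>\<in>space P. Y k \<omega> = y \<and> Z k \<omega> \<in> A}) \<omega>
                   = measure (K (Y (k - 1) \<omega>)) ({y} \<times> A))"

definition E0 :: "'a measure \<Rightarrow> (nat \<Rightarrow> 'a \<Rightarrow> real) \<Rightarrow> real \<Rightarrow> real \<Rightarrow> ennreal" where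
  "E0 P Z \<theta> \<alpha> = (\<integral>\<^sup>+ \<omega>. ennreal (exp (\<theta> * Z 0 \<omega> powr \<alpha>)) \<partial>P)"

definition Msup :: "('s \<Rightarrow> ('s \<times> real) measure) \<Rightarrow> real \<Rightarrow> real \<Rightarrow> ennreal" where
  "Msup K \<theta> \<alpha> = (SUP u. \<integral>\<^sup>+ x. ennreal (exp (\<theta> * snd x powr \<alpha>)) \<partial>K u)"

end

theory Submission
  imports Defs
begin

text \<open>Write \<open>S\<^sub>k = Z\<^sub>0 + \<dots> + Z\<^sub>k\<close>. Since \<open>t \<mapsto> t powr \<alpha>\<close> is subadditive for \<open>0 < \<alpha> \<le> 1\<close>,
  \<open>exp (\<theta> S\<^sub>k\<^sub>+\<^sub>1 powr \<alpha>) \<le> exp (\<theta> S\<^sub>k powr \<alpha>) exp (\<theta> Z\<^sub>k\<^sub>+\<^sub>1 powr \<alpha>)\<close>. The first factor is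
  measurable with respect to the past of time \<open>k + 1\<close>, so by (M1) the second factor may be
  replaced by its integral against the kernel \<open>K (Y\<^sub>k)\<close>, which is at most \<open>Msup\<close>; induction on
  \<open>k\<close> gives the moment bound. The tail bound is Chernoff's inequality, with \<open>C\<close> chosen so that
  \<open>\<theta> C powr \<alpha> = ln Msup + ln E0 + 1\<close> (both logarithms truncated at \<open>0\<close>).\<close>

lemma powr_add_le_add_powr:
  fixes a b \<alpha> :: real
  assumes "0 \<le> a" "0 \<le> b" "0 < \<alpha>" "\<alpha> \<le> 1"
  shows "(a + b) powr \<alpha> \<le> a powr \<alpha> + b powr \<alpha>"
proof (cases "a + b = 0")
  case True
  then show ?thesis using assms by simp
next
  case False
  then have s: "0 < a + b" using assms by simp
  have le_powr: "x \<le> x powr \<alpha>" if "0 \<le> x" "x \<le> 1" for x :: real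
    using that assms powr_mono'[of \<alpha> 1 x] by (cases "x = 0") auto
  have "1 = a / (a + b) + b / (a + b)"
    using s by (simp add: add_divide_distrib[symmetric])
  also have "\<dots> \<le> (a / (a + b)) powr \<alpha> + (b / (a + b)) powr \<alpha>"
    using assms s by (intro add_mono le_powr) auto
  also have "\<dots> = (a powr \<alpha> + b powr \<alpha>) / (a + b) powr \<alpha>"
    using assms s by (simp add: powr_divide add_divide_distrib)
  finally show ?thesis using s by (simp add: field_simps)
qed

lemma measure_eqI_singleton_times:
  fixes M N :: "('s::countable \<times> 'b) measure"
  assumes sets_M: "sets M = sets (count_space UNIV \<Otimes>\<^sub>M B)"
    and sets_N: "sets N = sets (count_space UNIV \<Otimes>\<^sub>M B)"
    and finite: "emeasure M (UNIV \<times> space B) \<noteq> \<infinity>"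
    and eq: "\<And>y b. b \<in> sets B \<Longrightarrow> emeasure M ({y} \<times> b) = emeasure N ({y} \<times> b)"
  shows "M = N"
proof (rule measure_eqI_generator_eq[OF Int_stable_pair_measure_generator[of "count_space UNIV" B]])
  let ?E = "{a \<times> b |a b. a \<in> sets (count_space (UNIV :: 's set)) \<and> b \<in> sets B}"
  show "?E \<subseteq> Pow (UNIV \<times> space B)"
    using sets.space_closed[of B] by auto
  show "sets M = sigma_sets (UNIV \<times> space B) ?E" "sets N = sigma_sets (UNIV \<times> space B) ?E"
    unfolding sets_M sets_N sets_pair_measure by simp_all
  show "range (\<lambda>_. UNIV \<times> space B) \<subseteq> ?E" "(\<Union>i::nat. UNIV \<times> space B) = UNIV \<times> space B"
    by auto
  show "emeasure M (UNIV \<times> space B) \<noteq> \<infinity>" for i :: nat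
    by (fact finite)
  fix X assume "X \<in> ?E"
  then obtain a b where X: "X = (\<Union>y\<in>a. {y} \<times> b)" and b: "b \<in> sets B" by blast
  have sets_singleton_times: "{y} \<times> b \<in> sets M" "{y} \<times> b \<in> sets N" for y
    using b by (simp_all add: sets_M sets_N)
  have disj: "disjoint_family_on (\<lambda>y. {y} \<times> b) a"
    by (auto simp: disjoint_family_on_def)
  show "emeasure M X = emeasure N X"
    unfolding X using b sets_singleton_times disj
    by (simp add: emeasure_UN_countable eq)
qed

lemma (in sigma_finite_subalgebra) nn_integral_mult_indicator_cond_exp:
  assumes A: "A \<in> sets M"
    and G: "G \<in> borel_measurable M" "\<And>\<omega>. \<omega> \<in> space M \<Longrightarrow> 0 \<le> G \<omega> \<and> G \<omega> \<le> 1"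
    and cond: "AE \<omega> in M. real_cond_exp M F (indicator A) \<omega> = G \<omega>"
    and f_F: "f \<in> borel_measurable F" and f_int: "integrable M f"
    and f_nonneg: "\<And>\<omega>. \<omega> \<in> space M \<Longrightarrow> 0 \<le> f \<omega>"
  shows "(\<integral>\<^sup>+\<omega>. ennreal (f \<omega> * indicator A \<omega>) \<partial>M) = (\<integral>\<^sup>+\<omega>. ennreal (f \<omega> * G \<omega>) \<partial>M)"
proof -
  have int_A: "integrable M (\<lambda>\<omega>. f \<omega> * indicator A \<omega>)"
    by (rule integrable_real_mult_indicator[OF A f_int])
  have int_G: "integrable M (\<lambda>\<omega>. f \<omega> * G \<omega>)"
    using G f_nonneg measurable_from_subalg[OF subalg f_F]
    by (intro Bochner_Integration.integrable_bound[OF f_int]) (auto intro!: AE_I2 mult_left_le)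
  have "(\<integral>\<^sup>+\<omega>. f \<omega> * indicator A \<omega> \<partial>M) = (\<integral>\<omega>. f \<omega> * indicator A \<omega> \<partial>M)"
    by (rule nn_integral_eq_integral[OF int_A]) (auto simp: f_nonneg)
  also have "(\<integral>\<omega>. f \<omega> * indicator A \<omega> \<partial>M) = (\<integral>\<omega>. f \<omega> * real_cond_exp M F (indicator A) \<omega> \<partial>M)"
    using A by (intro real_cond_exp_intg(2)[OF int_A f_F, symmetric]) simp
  also have "\<dots> = (\<integral>\<omega>. f \<omega> * G \<omega> \<partial>M)"
    using cond G(1) measurable_from_subalg[OF subalg f_F] by (intro integral_cong_AE) auto
  also have "ennreal \<dots> = (\<integral>\<^sup>+\<omega>. f \<omega> * G \<omega> \<partial>M)"
    by (rule nn_integral_eq_integral[OF int_G, symmetric]) (auto simp: G f_nonneg)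
  finally show ?thesis .
qed

lemma (in sigma_finite_subalgebra) distr_density_eq_bind_cond_kernel:
  fixes X :: "'a \<Rightarrow> 's::countable \<times> 'b"
  assumes nonempty: "space M \<noteq> {}"
    and X: "X \<in> measurable M (count_space UNIV \<Otimes>\<^sub>M B)"
    and \<kappa>: "\<kappa> \<in> measurable M (subprob_algebra (count_space UNIV \<Otimes>\<^sub>M B))"
    and cond: "\<And>y b. b \<in> sets B \<Longrightarrow>
      AE \<omega> in M. real_cond_exp M F (indicator {\<omega>\<in>space M. X \<omega> \<in> {y} \<times> b}) \<omega> = measure (\<kappa> \<omega>) ({y} \<times> b)"
    and f_F: "f \<in> borel_measurable F" and f_int: "integrable M f"
    and f_nonneg: "\<And>\<omega>. \<omega> \<in> space M \<Longrightarrow> 0 \<le> f \<omega>"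
  shows "distr (density M f) (count_space UNIV \<Otimes>\<^sub>M B) X = density M f \<bind> \<kappa>"
proof (rule measure_eqI_singleton_times)
  let ?N = "count_space UNIV \<Otimes>\<^sub>M B"
  have subprob: "subprob_space (\<kappa> \<omega>)" "sets (\<kappa> \<omega>) = sets ?N" if "\<omega> \<in> space M" for \<omega>
    using measurable_space[OF \<kappa> that] by (auto simp: space_subprob_algebra)
  have X_D: "X \<in> measurable (density M f) ?N" and \<kappa>_D: "\<kappa> \<in> measurable (density M f) (subprob_algebra ?N)"
    using X \<kappa> by simp_all
  show "sets (distr (density M f) ?N X) = sets ?N"
    by simp
  show "sets (density M f \<bind> \<kappa>) = sets ?N"
    using nonempty subprob by (intro sets_bind) auto
  have "emeasure (distr (density M f) ?N X) (UNIV \<times> space B) = emeasure (density M f) (space M)"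
    using measurable_space[OF X]
    by (simp add: emeasure_distr[OF X_D] space_pair_measure) (metis Int_absorb1 subsetI vimageI)
  also have "\<dots> = ennreal (\<integral>\<omega>. f \<omega> \<partial>M)"
    using f_int f_nonneg by (simp add: emeasure_density nn_integral_eq_integral cong: nn_integral_cong)
  finally show "emeasure (distr (density M f) ?N X) (UNIV \<times> space B) \<noteq> \<infinity>"
    by simp
  fix y :: 's and b assume b: "b \<in> sets B"
  then have yb: "{y} \<times> b \<in> sets ?N"
    by simp
  have "emeasure (distr (density M f) ?N X) ({y} \<times> b) = emeasure (density M f) {\<omega>\<in>space M. X \<omega> \<in> {y} \<times> b}"
    by (simp add: emeasure_distr[OF X_D yb] vimage_def Int_def conj_commute)
  also have "\<dots> = (\<integral>\<^sup>+\<omega>. ennreal (f \<omega> * indicator {\<omega>\<in>space M. X \<omega> \<in> {y} \<times> b} \<omega>) \<partial>M)"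
    using measurable_sets[OF X_D yb] measurable_from_subalg[OF subalg f_F]
    by (auto simp: emeasure_density vimage_def Int_def conj_commute intro!: nn_integral_cong split: split_indicator)
  also have "\<dots> = (\<integral>\<^sup>+\<omega>. ennreal (f \<omega> * measure (\<kappa> \<omega>) ({y} \<times> b)) \<partial>M)"
  proof (rule nn_integral_mult_indicator_cond_exp[OF _ _ _ cond[OF b] f_F f_int f_nonneg])
    show "{\<omega>\<in>space M. X \<omega> \<in> {y} \<times> b} \<in> sets M"
      using measurable_sets[OF X yb] by (simp add: vimage_def Int_def conj_commute)
    show "(\<lambda>\<omega>. measure (\<kappa> \<omega>) ({y} \<times> b)) \<in> borel_measurable M"
      using measurable_compose[OF \<kappa> measurable_measure_subprob_algebra[OF yb]] .
    show "0 \<le> measure (\<kappa> \<omega>) ({y} \<times> b) \<and> measure (\<kappa> \<omega>) ({y} \<times> b) \<le> 1" if "\<omega> \<in> space M" for \<omega>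
      using subprob_space.subprob_measure_le_1[OF subprob(1)[OF that]] by simp
  qed
  also have "\<dots> = (\<integral>\<^sup>+\<omega>. f \<omega> * emeasure (\<kappa> \<omega>) ({y} \<times> b) \<partial>M)"
    using subprob f_nonneg
    by (intro nn_integral_cong) (simp add: ennreal_mult subprob_space.emeasure_subprob_space_less_top
        finite_measure.emeasure_eq_measure[OF subprob_space.axioms(1)])
  also have "\<dots> = (\<integral>\<^sup>+\<omega>. emeasure (\<kappa> \<omega>) ({y} \<times> b) \<partial>density M f)"
    using measurable_compose[OF \<kappa> measurable_emeasure_subprob_algebra[OF yb]] measurable_from_subalg[OF subalg f_F]
    by (simp add: nn_integral_density)
  also have "\<dots> = emeasure (density M f \<bind> \<kappa>) ({y} \<times> b)"
    using nonempty by (intro emeasure_bind[symmetric, OF _ \<kappa>_D yb]) simp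
  finally show "emeasure (distr (density M f) ?N X) ({y} \<times> b) = emeasure (density M f \<bind> \<kappa>) ({y} \<times> b)" .
qed

lemma (in sigma_finite_subalgebra) nn_integral_mult_cond_kernel:
  fixes X :: "'a \<Rightarrow> 's::countable \<times> 'b"
  assumes X: "X \<in> measurable M (count_space UNIV \<Otimes>\<^sub>M B)"
    and \<kappa>: "\<kappa> \<in> measurable M (subprob_algebra (count_space UNIV \<Otimes>\<^sub>M B))"
    and cond: "\<And>y b. b \<in> sets B \<Longrightarrow>
      AE \<omega> in M. real_cond_exp M F (indicator {\<omega>\<in>space M. X \<omega> \<in> {y} \<times> b}) \<omega> = measure (\<kappa> \<omega>) ({y} \<times> b)"
    and f_F: "f \<in> borel_measurable F" and f_int: "integrable M f"
    and f_nonneg: "\<And>\<omega>. \<omega> \<in> space M \<Longrightarrow> 0 \<le> f \<omega>"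
    and h: "h \<in> borel_measurable (count_space UNIV \<Otimes>\<^sub>M B)"
  shows "(\<integral>\<^sup>+\<omega>. f \<omega> * h (X \<omega>) \<partial>M) = (\<integral>\<^sup>+\<omega>. f \<omega> * (\<integral>\<^sup>+x. h x \<partial>\<kappa> \<omega>) \<partial>M)"
proof (cases "space M = {}")
  case True
  then show ?thesis by (simp add: nn_integral_empty)
next
  case False
  have f_M: "f \<in> borel_measurable M"
    by (rule measurable_from_subalg[OF subalg f_F])
  have "(\<integral>\<^sup>+\<omega>. f \<omega> * h (X \<omega>) \<partial>M) = (\<integral>\<^sup>+\<omega>. h (X \<omega>) \<partial>density M f)"
    using h X f_M by (simp add: nn_integral_density)
  also have "\<dots> = (\<integral>\<^sup>+x. h x \<partial>distr (density M f) (count_space UNIV \<Otimes>\<^sub>M B) X)"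
    using h X by (simp add: nn_integral_distr)
  also have "\<dots> = (\<integral>\<^sup>+x. h x \<partial>(density M f \<bind> \<kappa>))"
    by (simp add: distr_density_eq_bind_cond_kernel[OF False X \<kappa> cond f_F f_int f_nonneg])
  also have "\<dots> = (\<integral>\<^sup>+\<omega>. (\<integral>\<^sup>+x. h x \<partial>\<kappa> \<omega>) \<partial>density M f)"
    using \<kappa> by (intro nn_integral_bind[OF h]) simp
  also have "\<dots> = (\<integral>\<^sup>+\<omega>. f \<omega> * (\<integral>\<^sup>+x. h x \<partial>\<kappa> \<omega>) \<partial>M)"
    using measurable_compose[OF \<kappa> nn_integral_measurable_subprob_algebra[OF h]] f_M
    by (simp add: nn_integral_density)
  finally show ?thesis .
qed

lemma emeasure_greater_le_exp_powr_moment: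
  fixes S :: "'a \<Rightarrow> real"
  assumes [measurable]: "S \<in> borel_measurable M" and "0 \<le> t" "0 < \<theta>" "0 \<le> \<alpha>"
  shows "emeasure M {\<omega>\<in>space M. t < S \<omega>}
    \<le> ennreal (exp (- \<theta> * t powr \<alpha>)) * (\<integral>\<^sup>+\<omega>. exp (\<theta> * S \<omega> powr \<alpha>) \<partial>M)"
proof -
  have "emeasure M {\<omega>\<in>space M. t < S \<omega>} \<le> emeasure M {\<omega>\<in>space M. t powr \<alpha> \<le> S \<omega> powr \<alpha>}"
    using assms(2,4) by (intro emeasure_mono) (auto intro: powr_mono2)
  also have "\<dots> \<le> ennreal (exp (- \<theta> * t powr \<alpha>)) * (\<integral>\<^sup>+\<omega>\<in>space M. exp (\<theta> * S \<omega> powr \<alpha>) \<partial>M)"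
    using assms(3) by (intro Chernoff_ineq_nn_integral_ge) auto
  also have "(\<integral>\<^sup>+\<omega>\<in>space M. exp (\<theta> * S \<omega> powr \<alpha>) \<partial>M) = (\<integral>\<^sup>+\<omega>. exp (\<theta> * S \<omega> powr \<alpha>) \<partial>M)"
    by (intro nn_integral_cong) simp
  finally show ?thesis .
qed

lemma power_mult_le_exp_ln_max:
  fixes m e :: real
  assumes "0 \<le> m" "0 \<le> e" "1 \<le> k"
  shows "m ^ k * e \<le> exp ((ln (max 1 m) + ln (max 1 e)) * real k)"
proof -
  have "m ^ k \<le> max 1 m ^ k"
    using assms by (intro power_mono) auto
  also have "\<dots> = exp (ln (max 1 m) * real k)"
    by (simp add: exp_of_nat2_mult)
  finally have m_le: "m ^ k \<le> exp (ln (max 1 m) * real k)" .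
  have "e \<le> exp (ln (max 1 e))"
    by simp
  also have "\<dots> \<le> exp (ln (max 1 e) * real k)"
    using assms mult_left_mono[of 1 "real k" "ln (max 1 e)"] by (simp only: exp_le_cancel_iff) simp
  finally have e_le: "e \<le> exp (ln (max 1 e) * real k)" .
  show ?thesis
    using mult_mono[OF m_le e_le] assms by (simp add: distrib_right exp_add)
qed

lemma M1_settingD:
  assumes "M1_setting P Y Z K"
  shows "prob_space P"
    and "Y k \<in> measurable P (count_space UNIV)" "Z k \<in> borel_measurable P"
    and "\<omega> \<in> space P \<Longrightarrow> 0 \<le> Z k \<omega>"
    and "prob_space (K u)" "sets (K u) = sets (count_space UNIV \<Otimes>\<^sub>M borel)"
    and "1 \<le> k \<Longrightarrow> A \<in> sets borel \<Longrightarrow>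
      AE \<omega> in P. real_cond_exp P (past_alg P Y Z k) (indicator {\<omega>\<in>space P. Y k \<omega> = y \<and> Z k \<omega> \<in> A}) \<omega>
        = measure (K (Y (k - 1) \<omega>)) ({y} \<times> A)"
  using assms unfolding M1_setting_def by auto

lemma M1_setting_kernel_measurable:
  assumes "M1_setting P Y Z K"
  shows "K \<in> measurable (count_space UNIV) (subprob_algebra (count_space UNIV \<Otimes>\<^sub>M borel))"
  using M1_settingD(5,6)[OF assms] by (auto simp: space_subprob_algebra prob_space_imp_subprob_space)

lemma sigma_finite_subalgebra_past_alg:
  assumes "finite_measure P"
    and "\<And>i. Y i \<in> measurable P (count_space UNIV)" "\<And>i. Z i \<in> borel_measurable P"
  shows "sigma_finite_subalgebra P (past_alg P Y Z k)"
proof -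
  let ?g = "\<lambda>\<omega>. \<lambda>i\<in>{..<k}. (Y i \<omega>, Z i \<omega>)"
  let ?N = "PiM {..<k} (\<lambda>_. count_space UNIV \<Otimes>\<^sub>M (borel :: real measure))"
  have g: "?g \<in> measurable P ?N"
    using assms(2,3) by (intro measurable_restrict measurable_Pair) auto
  have "subalgebra P (past_alg P Y Z k)"
    unfolding subalgebra_def past_alg_def
    using g by (auto simp: sets_vimage_algebra2 measurable_def intro: measurable_sets)
  then show ?thesis
    using assms(1)
    by (intro finite_measure_subalgebra_is_sigma_finite)
      (simp add: finite_measure_subalgebra_def finite_measure_subalgebra_axioms_def)
qed

lemma measurable_past_alg_Z:
  assumes "i < k"
  shows "Z i \<in> borel_measurable (past_alg P Y Z k)"
proof -
  let ?g = "\<lambda>\<omega>. \<lambda>i\<in>{..<k}. (Y i \<omega>, Z i \<omega>)"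
  let ?N = "PiM {..<k} (\<lambda>_. count_space UNIV \<Otimes>\<^sub>M (borel :: real measure))"
  have "?g \<in> measurable (past_alg P Y Z k) ?N"
    unfolding past_alg_def by (rule measurable_vimage_algebra1) (auto simp: space_PiM space_pair_measure)
  moreover have "(\<lambda>x. snd (x i)) \<in> borel_measurable ?N"
    using assms by (intro measurable_compose[OF measurable_component_singleton[of i] measurable_snd]) simp
  ultimately have "(\<lambda>\<omega>. snd (?g \<omega> i)) \<in> borel_measurable (past_alg P Y Z k)"
    by (rule measurable_compose)
  then show ?thesis
    using assms by simp
qed

lemma M1_setting_nn_integral_mult_next:
  fixes Y :: "nat \<Rightarrow> 'a \<Rightarrow> 's::countable"
  assumes M1: "M1_setting P Y Z K"
    and f_past: "f \<in> borel_measurable (past_alg P Y Z (Suc n))" and f_int: "integrable P f"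
    and f_nonneg: "\<And>\<omega>. \<omega> \<in> space P \<Longrightarrow> 0 \<le> f \<omega>"
    and h: "h \<in> borel_measurable (count_space UNIV \<Otimes>\<^sub>M borel)"
  shows "(\<integral>\<^sup>+\<omega>. f \<omega> * h (Y (Suc n) \<omega>, Z (Suc n) \<omega>) \<partial>P) = (\<integral>\<^sup>+\<omega>. f \<omega> * (\<integral>\<^sup>+x. h x \<partial>K (Y n \<omega>)) \<partial>P)"
proof -
  note M1D = M1_settingD[OF M1]
  interpret prob_space P by (fact M1D(1))
  interpret past: sigma_finite_subalgebra P "past_alg P Y Z (Suc n)"
    using M1D(2,3) by (intro sigma_finite_subalgebra_past_alg) unfold_locales
  show ?thesis
  proof (rule past.nn_integral_mult_cond_kernel[OF _ _ _ f_past f_int f_nonneg h])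
    show "(\<lambda>\<omega>. (Y (Suc n) \<omega>, Z (Suc n) \<omega>)) \<in> measurable P (count_space UNIV \<Otimes>\<^sub>M borel)"
      using M1D(2,3) by measurable
    show "(\<lambda>\<omega>. K (Y n \<omega>)) \<in> measurable P (subprob_algebra (count_space UNIV \<Otimes>\<^sub>M borel))"
      using M1D(2) M1_setting_kernel_measurable[OF M1] by (rule measurable_compose)
    show "AE \<omega> in P. real_cond_exp P (past_alg P Y Z (Suc n))
        (indicator {\<omega>\<in>space P. (Y (Suc n) \<omega>, Z (Suc n) \<omega>) \<in> {y} \<times> b}) \<omega> = measure (K (Y n \<omega>)) ({y} \<times> b)"
      if "b \<in> sets borel" for y b
      using M1D(7)[of "Suc n" b y] that by simp
  qed
qed

lemma M1_setting_exp_moment_le: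
  fixes Y :: "nat \<Rightarrow> 'a \<Rightarrow> 's::countable"
  assumes M1: "M1_setting P Y Z K" and E0_finite: "E0 P Z \<theta> \<alpha> < \<infinity>" and Msup_finite: "Msup K \<theta> \<alpha> < \<infinity>"
    and \<alpha>: "0 < \<alpha>" "\<alpha> \<le> 1" and \<theta>: "0 \<le> \<theta>"
  shows "(\<integral>\<^sup>+\<omega>. ennreal (exp (\<theta> * (\<Sum>i\<le>k. Z i \<omega>) powr \<alpha>)) \<partial>P) \<le> Msup K \<theta> \<alpha> ^ k * E0 P Z \<theta> \<alpha>"
proof (induction k)
  case 0
  then show ?case by (simp add: E0_def)
next
  case (Suc n)
  note M1D = M1_settingD[OF M1]
  define f where "f \<omega> = exp (\<theta> * (\<Sum>i\<le>n. Z i \<omega>) powr \<alpha>)" for \<omega>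
  define h :: "'s \<times> real \<Rightarrow> ennreal" where "h x = exp (\<theta> * snd x powr \<alpha>)" for x
  have f_past: "f \<in> borel_measurable (past_alg P Y Z (Suc n))"
    unfolding f_def using measurable_past_alg_Z[where k="Suc n" and P=P and Y=Y and Z=Z] by measurable
  have f_P: "f \<in> borel_measurable P"
    unfolding f_def using M1D(3) by measurable
  have "(\<integral>\<^sup>+\<omega>. f \<omega> \<partial>P) \<le> Msup K \<theta> \<alpha> ^ n * E0 P Z \<theta> \<alpha>"
    using Suc.IH by (simp add: f_def)
  also have "\<dots> < \<infinity>"
    using E0_finite Msup_finite by (simp add: ennreal_mult_less_top power_less_top_ennreal)
  finally have f_int: "integrable P f"
    using f_P by (intro integrableI_nonneg) (auto simp: f_def)
  have "(\<integral>\<^sup>+\<omega>. exp (\<theta> * (\<Sum>i\<le>Suc n. Z i \<omega>) powr \<alpha>) \<partial>P) \<le> (\<integral>\<^sup>+\<omega>. f \<omega> * h (Y (Suc n) \<omega>, Z (Suc n) \<omega>) \<partial>P)"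
  proof (intro nn_integral_mono)
    fix \<omega> assume "\<omega> \<in> space P"
    then have "(\<Sum>i\<le>Suc n. Z i \<omega>) powr \<alpha> \<le> (\<Sum>i\<le>n. Z i \<omega>) powr \<alpha> + Z (Suc n) \<omega> powr \<alpha>"
      using M1D(4) \<alpha> by (simp add: powr_add_le_add_powr sum_nonneg)
    then have "exp (\<theta> * (\<Sum>i\<le>Suc n. Z i \<omega>) powr \<alpha>) \<le> f \<omega> * exp (\<theta> * Z (Suc n) \<omega> powr \<alpha>)"
      using \<theta> by (simp add: f_def mult_left_mono flip: exp_add distrib_left)
    then show "ennreal (exp (\<theta> * (\<Sum>i\<le>Suc n. Z i \<omega>) powr \<alpha>)) \<le> f \<omega> * h (Y (Suc n) \<omega>, Z (Suc n) \<omega>)"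
      by (simp add: h_def f_def flip: ennreal_mult)
  qed
  also have "\<dots> = (\<integral>\<^sup>+\<omega>. f \<omega> * (\<integral>\<^sup>+x. h x \<partial>K (Y n \<omega>)) \<partial>P)"
    by (rule M1_setting_nn_integral_mult_next[OF M1 f_past f_int]) (simp_all add: f_def h_def)
  also have "\<dots> \<le> (\<integral>\<^sup>+\<omega>. f \<omega> * Msup K \<theta> \<alpha> \<partial>P)"
    unfolding Msup_def h_def by (intro nn_integral_mono mult_left_mono SUP_upper) auto
  also have "\<dots> = Msup K \<theta> \<alpha> * (\<integral>\<^sup>+\<omega>. f \<omega> \<partial>P)"
    using f_P by (simp add: nn_integral_multc mult.commute)
  also have "\<dots> \<le> Msup K \<theta> \<alpha> * (Msup K \<theta> \<alpha> ^ n * E0 P Z \<theta> \<alpha>)"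
    using Suc.IH by (intro mult_left_mono) (simp_all add: f_def)
  finally show ?case
    by (simp add: mult.assoc)
qed

lemma M1_setting_tail_bound:
  fixes Y :: "nat \<Rightarrow> 'a \<Rightarrow> 's::countable"
  assumes M1: "M1_setting P Y Z K" and E0_finite: "E0 P Z \<theta> \<alpha> < \<infinity>" and Msup_finite: "Msup K \<theta> \<alpha> < \<infinity>"
    and \<alpha>: "0 < \<alpha>" "\<alpha> \<le> 1" and \<theta>: "0 < \<theta>"
    and L: "L = ln (max 1 (enn2real (Msup K \<theta> \<alpha>))) + ln (max 1 (enn2real (E0 P Z \<theta> \<alpha>))) + 1"
  shows "measure P {\<omega>\<in>space P. (L / \<theta>) powr (1 / \<alpha>) * real k powr (1 / \<alpha>) < (\<Sum>i\<le>k. Z i \<omega>)}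
    \<le> exp (- real k)"
proof (cases "k = 0")
  case True
  then show ?thesis
    using prob_space.prob_le_1[OF M1_settingD(1)[OF M1]] by simp
next
  case False
  note M1D = M1_settingD[OF M1]
  interpret prob_space P by (fact M1D(1))
  define m where "m = enn2real (Msup K \<theta> \<alpha>)"
  define e where "e = enn2real (E0 P Z \<theta> \<alpha>)"
  have Msup_eq: "Msup K \<theta> \<alpha> = ennreal m" and E0_eq: "E0 P Z \<theta> \<alpha> = ennreal e"
    using Msup_finite E0_finite by (simp_all add: m_def e_def less_top)
  have "0 \<le> m" "0 \<le> e"
    by (simp_all add: m_def e_def)
  define t where "t = (L / \<theta>) powr (1 / \<alpha>) * real k powr (1 / \<alpha>)"
  have "1 \<le> L"
    by (simp add: L)
  then have t: "0 \<le> t" "\<theta> * t powr \<alpha> = L * real k"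
    using \<alpha> \<theta> by (simp_all add: t_def powr_mult powr_powr)
  have "emeasure P {\<omega>\<in>space P. t < (\<Sum>i\<le>k. Z i \<omega>)}
      \<le> ennreal (exp (- \<theta> * t powr \<alpha>)) * (\<integral>\<^sup>+\<omega>. exp (\<theta> * (\<Sum>i\<le>k. Z i \<omega>) powr \<alpha>) \<partial>P)"
    using M1D(3) t \<theta> \<alpha> by (intro emeasure_greater_le_exp_powr_moment) auto
  also have "\<dots> = ennreal (exp (- L * real k)) * (\<integral>\<^sup>+\<omega>. exp (\<theta> * (\<Sum>i\<le>k. Z i \<omega>) powr \<alpha>) \<partial>P)"
    using t(2) by simp
  also have "\<dots> \<le> ennreal (exp (- L * real k)) * (Msup K \<theta> \<alpha> ^ k * E0 P Z \<theta> \<alpha>)"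
    using M1_setting_exp_moment_le[OF M1 E0_finite Msup_finite \<alpha>] \<theta> by (intro mult_left_mono) auto
  also have "\<dots> = ennreal (exp (- L * real k) * (m ^ k * e))"
    using Msup_eq E0_eq \<open>0 \<le> m\<close> \<open>0 \<le> e\<close> by (simp add: ennreal_mult ennreal_power)
  also have "\<dots> \<le> ennreal (exp (- L * real k) * exp ((L - 1) * real k))"
    using power_mult_le_exp_ln_max[of m e k] False
    by (intro ennreal_leI mult_left_mono) (simp_all add: L m_def e_def)
  also have "\<dots> = ennreal (exp (- real k))"
    by (simp flip: exp_add) (simp add: algebra_simps)
  finally show ?thesis
    by (simp add: t_def emeasure_eq_measure)
qed

theorem lemma6p3:
  fixes \<theta> \<alpha> :: real
  assumes "0 < \<alpha>" "\<alpha> \<le> 1" "0 < \<theta>"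
  shows "(\<forall>(P :: 'a measure) (Y :: nat \<Rightarrow> 'a \<Rightarrow> 's::countable) Z K.
            M1_setting P Y Z K \<and> E0 P Z \<theta> \<alpha> < \<infinity> \<and> Msup K \<theta> \<alpha> < \<infinity> \<longrightarrow>
            (\<forall>k. (\<integral>\<^sup>+ \<omega>. ennreal (exp (\<theta> * (\<Sum>i\<le>k. Z i \<omega>) powr \<alpha>)) \<partial>P)
                   \<le> Msup K \<theta> \<alpha> ^ k * E0 P Z \<theta> \<alpha>))
       \<and> (\<forall>e m. \<exists>C>0. \<exists>C'>0. \<forall>(P :: 'a measure) (Y :: nat \<Rightarrow> 'a \<Rightarrow> 's) Z K.
            M1_setting P Y Z K \<and> E0 P Z \<theta> \<alpha> = e \<and> Msup K \<theta> \<alpha> = m \<and> e < \<infinity> \<and> m < \<infinity> \<longrightarrow>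
            (\<forall>k::nat. measure P {\<omega>\<in>space P. (\<Sum>i\<le>k. Z i \<omega>) > C * real k powr (1 / \<alpha>)}
                       \<le> exp (- C' * real k)))"
proof (intro conjI allI impI)
  fix P :: "'a measure" and Y :: "nat \<Rightarrow> 'a \<Rightarrow> 's" and Z K k
  assume "M1_setting P Y Z K \<and> E0 P Z \<theta> \<alpha> < \<infinity> \<and> Msup K \<theta> \<alpha> < \<infinity>"
  then show "(\<integral>\<^sup>+ \<omega>. ennreal (exp (\<theta> * (\<Sum>i\<le>k. Z i \<omega>) powr \<alpha>)) \<partial>P) \<le> Msup K \<theta> \<alpha> ^ k * E0 P Z \<theta> \<alpha>"
    using M1_setting_exp_moment_le[of P Y Z K \<theta> \<alpha> k] assms by auto
next
  fix e m :: ennreal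
  define L where "L = ln (max 1 (enn2real m)) + ln (max 1 (enn2real e)) + 1"
  have "1 \<le> L"
    by (simp add: L_def)
  then have "0 < (L / \<theta>) powr (1 / \<alpha>)"
    using assms by simp
  moreover have "measure P {\<omega>\<in>space P. (\<Sum>i\<le>k. Z i \<omega>) > (L / \<theta>) powr (1 / \<alpha>) * real k powr (1 / \<alpha>)}
      \<le> exp (- 1 * real k)"
    if "M1_setting P Y Z K \<and> E0 P Z \<theta> \<alpha> = e \<and> Msup K \<theta> \<alpha> = m \<and> e < \<infinity> \<and> m < \<infinity>"
    for P :: "'a measure" and Y :: "nat \<Rightarrow> 'a \<Rightarrow> 's" and Z K k
    using that M1_setting_tail_bound[OF _ _ _ assms, of P Y Z K L k] by (simp add: L_def)
  ultimately show "\<exists>C>0. \<exists>C'>0. \<forall>(P :: 'a measure) (Y :: nat \<Rightarrow> 'a \<Rightarrow> 's) Z K.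
      M1_setting P Y Z K \<and> E0 P Z \<theta> \<alpha> = e \<and> Msup K \<theta> \<alpha> = m \<and> e < \<infinity> \<and> m < \<infinity> \<longrightarrow>
      (\<forall>k::nat. measure P {\<omega>\<in>space P. (\<Sum>i\<le>k. Z i \<omega>) > C * real k powr (1 / \<alpha>)} \<le> exp (- C' * real k))"
    by (intro exI[of _ "(L / \<theta>) powr (1 / \<alpha>)"] conjI exI[of _ "1::real"]) auto
qed

end
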